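(* Let $G$ be a totally disconnected, locally compact group and $\mathcal{H}$ a group of automorphisms of $G$. Then the collection of bounded subsets of $\mathcal{H}$ is a bornological group structure on $\mathcal{H}$; that is, singleton sets are bounded, subsets of bounded sets are bounded, finite unions of bounded sets are bounded, and products $AB=\{\alpha\beta:\alpha\in A,\beta\in B\}$ and inverses $A^{-1}$ of bounded sets $A,B$ are bounded.
   Context: Automorphisms are continuous with continuous inverse. $\mathcal{B}(G)$ is the set of compact, open subgroups of $G$ with metric $d(V,W)=\log\bigl(|V:V\cap W|\cdot|W:W\cap V|\bigr)$. A set $B$ of automorphisms of $G$ is bounded if $B.V=\{\beta(V):\beta\in B\}$ has bounded diameter in $\mathcal{B}(G)$ for some (equivalently every) $V\in\mathcal{B}(G)$. *)

theory Defs
  imports "HOL-Analysis.Analysis" "HOL-Algebra.Bij" "HOL-Algebra.Coset"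
begin

definition topological_group :: "('a, 'b) monoid_scheme \<Rightarrow> 'a topology \<Rightarrow> bool" where
  "topological_group G T \<longleftrightarrow> group G \<and> topspace T = carrier G \<and>
     continuous_map (prod_topology T T) T (\<lambda>(x, y). x \<otimes>\<^bsub>G\<^esub> y) \<and>
     continuous_map T T (\<lambda>x. inv\<^bsub>G\<^esub> x)"

definition totally_disconnected_space :: "'a topology \<Rightarrow> bool" where
  "totally_disconnected_space T \<longleftrightarrow>
     (\<forall>S. connectedin T S \<longrightarrow> S = {} \<or> (\<exists>x. S = {x}))"

definition tdlc_group :: "('a, 'b) monoid_scheme \<Rightarrow> 'a topology \<Rightarrow> bool" where
  "tdlc_group G T \<longleftrightarrow> topological_group G T \<and> locally_compact_space T \<and>
     totally_disconnected_space T"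

definition top_auto :: "('a, 'b) monoid_scheme \<Rightarrow> 'a topology \<Rightarrow> ('a \<Rightarrow> 'a) set" where
  "top_auto G T = {\<alpha> \<in> auto G. homeomorphic_map T T \<alpha>}"

definition compact_open_subgroups :: "('a, 'b) monoid_scheme \<Rightarrow> 'a topology \<Rightarrow> 'a set set" where
  "compact_open_subgroups G T = {V. subgroup V G \<and> compactin T V \<and> openin T V}"

definition rel_index :: "('a, 'b) monoid_scheme \<Rightarrow> 'a set \<Rightarrow> 'a set \<Rightarrow> nat" where
  "rel_index G V W = card ((\<lambda>v. (V \<inter> W) #>\<^bsub>G\<^esub> v) ` V)"

definition cos_dist :: "('a, 'b) monoid_scheme \<Rightarrow> 'a set \<Rightarrow> 'a set \<Rightarrow> real" where
  "cos_dist G V W = ln (real (rel_index G V W * rel_index G W V))"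

definition bounded_auts :: "('a, 'b) monoid_scheme \<Rightarrow> 'a topology \<Rightarrow> ('a \<Rightarrow> 'a) set \<Rightarrow> bool" where
  "bounded_auts G T B \<longleftrightarrow>
     (\<exists>V \<in> compact_open_subgroups G T. \<exists>M::real.
        \<forall>\<beta> \<in> B. \<forall>\<gamma> \<in> B. cos_dist G (\<beta> ` V) (\<gamma> ` V) \<le> M)"

end

theory Submission
  imports Defs
begin

text \<open>The distance on \<B>(G) is invariant under automorphisms and satisfies the triangle
  inequality, because |U : U \<inter> W| \<le> |U : U \<inter> V| \<cdot> |V : V \<inter> W|. Hence a set B of automorphisms
  is bounded iff d(\<beta>W, W) is bounded for \<beta> \<in> B, for one fixed W \<in> \<B>(G); in this form the
  bornology axioms are short estimates, e.g. d(\<alpha>\<beta>W, W) \<le> d(\<beta>W, W) + d(\<alpha>W, W).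
  Such a W exists by van Dantzig's theorem: a compact open neighbourhood K of 1 exists since G
  is locally compact and totally disconnected, and the stabiliser {g. Kg = K} of K under right
  translation contains a neighbourhood of 1 by the tube lemma, so it is a compact open subgroup.\<close>

lemma card_image_le_if_factors:
  assumes "finite (f ` A)" and "\<And>a b. a \<in> A \<Longrightarrow> b \<in> A \<Longrightarrow> f a = f b \<Longrightarrow> g a = g b"
  shows "card (g ` A) \<le> card (f ` A)"
proof (rule surj_card_le[OF assms(1)])
  show "g ` A \<subseteq> (\<lambda>y. g (inv_into A f y)) ` f ` A"
  proof
    fix y assume "y \<in> g ` A"
    then obtain a where a: "a \<in> A" "y = g a" by blast
    then have "g a = g (inv_into A f (f a))"
      by (intro assms(2)) (auto intro: inv_into_into simp: f_inv_into_f)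
    then show "y \<in> (\<lambda>y. g (inv_into A f y)) ` f ` A" using a by blast
  qed
qed

lemma cos_dist_commute: "cos_dist G U V = cos_dist G V U"
  by (simp add: cos_dist_def mult.commute)

context group
begin

lemma rcos_eq_iff_mult_inv_mem:
  assumes "subgroup H G" "x \<in> carrier G" "y \<in> carrier G"
  shows "H #> x = H #> y \<longleftrightarrow> x \<otimes> inv y \<in> H"
proof
  assume "H #> x = H #> y"
  then have "x \<in> H #> y" using rcos_self[OF assms(2,1)] by simp
  then show "x \<otimes> inv y \<in> H"
    using subgroup.rcos_module_imp[OF assms(1) is_group assms(3)] by blast
next
  assume "x \<otimes> inv y \<in> H"
  then have "x \<in> H #> y"
    using subgroup.rcos_module_rev[OF assms(1) is_group assms(3,2)] by blast
  then show "H #> x = H #> y"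
    using repr_independence[OF _ assms(3,1)] by simp
qed

text \<open>The coset (U \<inter> W)u is determined by the pair ((U \<inter> V)u, (V \<inter> W)us\<inverse>), where s is a
  representative of (U \<inter> V)u chosen depending only on that coset.\<close>
lemma rel_index_submult:
  assumes U: "subgroup U G" and V: "subgroup V G" and W: "subgroup W G"
    and fin_UV: "finite ((\<lambda>u. (U \<inter> V) #> u) ` U)"
    and fin_VW: "finite ((\<lambda>v. (V \<inter> W) #> v) ` V)"
  shows "rel_index G U W \<le> rel_index G U V * rel_index G V W"
proof -
  have UV: "subgroup (U \<inter> V) G" and VW: "subgroup (V \<inter> W) G" and UW: "subgroup (U \<inter> W) G"
    using subgroups_Inter_pair[OF U V] subgroups_Inter_pair[OF V W] subgroups_Inter_pair[OF U W]
    by simp_all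
  have U_carrier: "u \<in> carrier G" if "u \<in> U" for u
    by (rule subgroup.mem_carrier[OF U that])
  define cos_UV where "cos_UV u = (U \<inter> V) #> u" for u
  define rep where "rep u = inv_into U cos_UV (cos_UV u)" for u
  have rep: "rep u \<in> U" "u \<otimes> inv (rep u) \<in> U \<inter> V" if "u \<in> U" for u
  proof -
    show rep_U: "rep u \<in> U" using that unfolding rep_def by (blast intro: inv_into_into)
    have "cos_UV u = cos_UV (rep u)" using that unfolding rep_def by (simp add: f_inv_into_f)
    then show "u \<otimes> inv (rep u) \<in> U \<inter> V"
      using rcos_eq_iff_mult_inv_mem[OF UV] U_carrier rep_U that unfolding cos_UV_def by blast
  qed
  define f where "f u = (cos_UV u, (V \<inter> W) #> (u \<otimes> inv (rep u)))" for u
  have f_into: "f ` U \<subseteq> cos_UV ` U \<times> (\<lambda>v. (V \<inter> W) #> v) ` V"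
    using rep unfolding f_def by blast
  have fin: "finite (cos_UV ` U \<times> (\<lambda>v. (V \<inter> W) #> v) ` V)"
    using fin_UV fin_VW unfolding cos_UV_def by simp
  have f_fibres: "(U \<inter> W) #> a = (U \<inter> W) #> b" if ab: "a \<in> U" "b \<in> U" "f a = f b" for a b
  proof -
    have ac: "a \<in> carrier G" and bc: "b \<in> carrier G" using ab U_carrier by auto
    define s where "s = rep a"
    have "cos_UV a = cos_UV b" using ab(3) unfolding f_def by simp
    then have s: "s \<in> carrier G" "rep b = s"
      using rep(1)[OF ab(1)] U_carrier unfolding s_def rep_def by auto
    have "(V \<inter> W) #> (a \<otimes> inv s) = (V \<inter> W) #> (b \<otimes> inv s)"
      using ab(3) s(2) unfolding f_def s_def by simp
    then have "(a \<otimes> inv s) \<otimes> inv (b \<otimes> inv s) \<in> V \<inter> W"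
      using rcos_eq_iff_mult_inv_mem[OF VW] ac bc s by simp
    moreover have "(a \<otimes> inv s) \<otimes> inv (b \<otimes> inv s) = a \<otimes> inv b"
      using ac bc s by (simp add: inv_mult_group m_assoc flip: m_assoc[of "inv s"])
    moreover have "a \<otimes> inv b \<in> U"
      using ab U by (simp add: subgroup.m_closed subgroup.m_inv_closed)
    ultimately show ?thesis using rcos_eq_iff_mult_inv_mem[OF UW ac bc] by simp
  qed
  have "rel_index G U W \<le> card (f ` U)"
    unfolding rel_index_def
    by (rule card_image_le_if_factors[OF finite_subset[OF f_into fin] f_fibres])
  also have "\<dots> \<le> card (cos_UV ` U) * card ((\<lambda>v. (V \<inter> W) #> v) ` V)"
    using card_mono[OF fin f_into] by (simp add: card_cartesian_product)
  finally show ?thesis unfolding rel_index_def cos_UV_def .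
qed

lemma auto_image_subset:
  assumes "\<alpha> \<in> auto G" "X \<subseteq> carrier G"
  shows "\<alpha> ` X \<subseteq> carrier G"
  using assms by (auto simp: auto_def hom_def)

lemma rel_index_image_auto:
  assumes a: "\<alpha> \<in> auto G" and X: "X \<subseteq> carrier G" and Y: "Y \<subseteq> carrier G"
  shows "rel_index G (\<alpha> ` X) (\<alpha> ` Y) = rel_index G X Y"
proof -
  have hom: "\<alpha> \<in> hom G G" and "bij_betw \<alpha> (carrier G) (carrier G)"
    using a by (auto simp: auto_def Bij_def)
  then have inj: "inj_on \<alpha> (carrier G)" by (simp add: bij_betw_def)
  have Int: "\<alpha> ` X \<inter> \<alpha> ` Y = \<alpha> ` (X \<inter> Y)"
    using inj X Y by (simp add: inj_on_image_Int)
  have cos: "\<alpha> ` (X \<inter> Y) #> \<alpha> x = \<alpha> ` ((X \<inter> Y) #> x)" if "x \<in> X" for x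
  proof -
    have "\<alpha> (h \<otimes> x) = \<alpha> h \<otimes> \<alpha> x" if "h \<in> X \<inter> Y" for h
      using hom_mult[OF hom] that \<open>x \<in> X\<close> X by auto
    then show ?thesis unfolding r_coset_def by force
  qed
  have "(\<lambda>v. (\<alpha> ` X \<inter> \<alpha> ` Y) #> v) ` \<alpha> ` X = image \<alpha> ` (\<lambda>x. (X \<inter> Y) #> x) ` X"
    using cos by (simp add: Int image_image)
  moreover have "inj_on (image \<alpha>) ((\<lambda>x. (X \<inter> Y) #> x) ` X)"
    by (rule inj_on_subset[OF inj_on_image_Pow[OF inj]]) (use X r_coset_subset_G in blast)
  ultimately show ?thesis unfolding rel_index_def by (simp add: card_image)
qed

lemma cos_dist_image_auto:
  assumes "\<alpha> \<in> auto G" "X \<subseteq> carrier G" "Y \<subseteq> carrier G"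
  shows "cos_dist G (\<alpha> ` X) (\<alpha> ` Y) = cos_dist G X Y"
  using rel_index_image_auto[OF assms] rel_index_image_auto[OF assms(1,3,2)]
  by (simp add: cos_dist_def)

lemma stabiliser_subgroup:
  assumes K: "K \<subseteq> carrier G"
  shows "subgroup {g \<in> carrier G. K #> g = K} G"
proof (rule subgroupI)
  show "{g \<in> carrier G. K #> g = K} \<noteq> {}" using K coset_mult_one by blast
next
  fix x assume x: "x \<in> {g \<in> carrier G. K #> g = K}"
  then have "K #> inv x = (K #> x) #> inv x" by simp
  also have "\<dots> = K #> (x \<otimes> inv x)" using K x by (intro coset_mult_assoc) auto
  also have "\<dots> = K" using K x by simp
  finally show "inv x \<in> {g \<in> carrier G. K #> g = K}" using x by simp
next
  fix x y assume x: "x \<in> {g \<in> carrier G. K #> g = K}" and y: "y \<in> {g \<in> carrier G. K #> g = K}"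
  have "K #> (x \<otimes> y) = (K #> x) #> y" using K x y by (intro coset_mult_assoc[symmetric]) auto
  then show "x \<otimes> y \<in> {g \<in> carrier G. K #> g = K}" using x y by simp
qed auto

lemma stabiliser_subset:
  assumes "\<one> \<in> K"
  shows "{g \<in> carrier G. K #> g = K} \<subseteq> K"
proof
  fix x assume x: "x \<in> {g \<in> carrier G. K #> g = K}"
  have "\<one> \<otimes> x \<in> K #> x" unfolding r_coset_def using assms by blast
  then show "x \<in> K" using x by simp
qed

lemma AutoGroup_mult_image:
  assumes "\<alpha> \<in> auto G" "\<beta> \<in> auto G" "X \<subseteq> carrier G"
  shows "(\<alpha> \<otimes>\<^bsub>AutoGroup G\<^esub> \<beta>) ` X = \<alpha> ` \<beta> ` X"
proof -
  have "\<alpha> \<in> Bij (carrier G)" "\<beta> \<in> Bij (carrier G)" using assms by (auto simp: auto_def)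
  then have "\<alpha> \<otimes>\<^bsub>AutoGroup G\<^esub> \<beta> = compose (carrier G) \<alpha> \<beta>"
    by (simp add: AutoGroup_def BijGroup_def)
  then show ?thesis using assms(3) by (force simp: compose_def)
qed

lemma AutoGroup_inv_image:
  assumes "\<alpha> \<in> auto G" "X \<subseteq> carrier G"
  shows "\<alpha> ` (inv\<^bsub>AutoGroup G\<^esub> \<alpha>) ` X = X" and "inv\<^bsub>AutoGroup G\<^esub> \<alpha> \<in> auto G"
proof -
  interpret AG: group "AutoGroup G" by (rule AutoGroup)
  have carrier: "carrier (AutoGroup G) = auto G" by (simp add: AutoGroup_def BijGroup_def)
  show inv_auto: "inv\<^bsub>AutoGroup G\<^esub> \<alpha> \<in> auto G" using AG.inv_closed assms(1) carrier by simp
  have "\<one>\<^bsub>AutoGroup G\<^esub> ` X = X" using assms(2) by (force simp: AutoGroup_def BijGroup_def)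
  then show "\<alpha> ` (inv\<^bsub>AutoGroup G\<^esub> \<alpha>) ` X = X"
    using AG.r_inv assms AutoGroup_mult_image[OF assms(1) inv_auto assms(2)] carrier by simp
qed

end

lemma connected_component_of_totally_disconnected:
  assumes "totally_disconnected_space T" "x \<in> topspace T"
  shows "connected_component_of_set T x = {x}"
proof -
  have "x \<in> connected_component_of_set T x"
    using assms(2) by (simp add: connected_component_of_refl)
  moreover have "connected_component_of_set T x = {} \<or> (\<exists>y. connected_component_of_set T x = {y})"
    using assms(1) connectedin_connected_component_of[of T x]
    unfolding totally_disconnected_space_def by blast
  ultimately show ?thesis by (metis empty_iff singleton_iff)
qed

lemma compact_open_nbhd_if_totally_disconnected:
  assumes lc: "locally_compact_space T" and hs: "Hausdorff_space T"
    and td: "totally_disconnected_space T" and x: "x \<in> topspace T"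
  obtains K where "compactin T K" "openin T K" "x \<in> K"
proof -
  obtain U K where UK: "openin T U" "compactin T K" "x \<in> U" "U \<subseteq> K"
    using lc x unfolding locally_compact_space_def by blast
  have "{x} \<in> connected_components_of T"
    unfolding connected_components_of_def
    using connected_component_of_totally_disconnected[OF td x] x by blast
  then obtain U' V' where U': "openin T U'" "openin T V'" "disjnt U' V'" "U' \<union> V' = topspace T"
    "{x} \<subseteq> U'" "U' \<subseteq> U"
    using wilder_locally_compact_component_thm[OF lc hs _ compactin_sing[THEN iffD2] UK(1)] x UK(3)
    by (metis empty_subsetI insert_subset)
  have "U' = topspace T - V'" using U'(3,4) by (auto simp: disjnt_def)
  then have "closedin T U'" using U'(2) by (simp add: closedin_diff)
  then have "compactin T U'" using UK(4) U'(6) by (intro closed_compactin[OF UK(2)]) auto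
  then show ?thesis using that U'(1,5) by simp
qed

locale top_group = group G for G (structure) +
  fixes T :: "'a topology"
  assumes topological_group: "topological_group G T"

lemma top_group_if_topological_group: "topological_group G T \<Longrightarrow> top_group G T"
  by (simp add: top_group_def top_group_axioms_def topological_group_def)

context top_group
begin

lemma topspace_eq_carrier: "topspace T = carrier G"
  using topological_group by (simp add: topological_group_def)

lemma continuous_map_mult:
  assumes "continuous_map X T f" "continuous_map X T g"
  shows "continuous_map X T (\<lambda>x. f x \<otimes> g x)"
proof -
  have "continuous_map (prod_topology T T) T (\<lambda>(x, y). x \<otimes> y)"
    using topological_group by (simp add: topological_group_def)
  from continuous_map_compose[OF continuous_map_pairedI[OF assms] this] show ?thesis
    by (simp add: o_def)
qed

lemma continuous_map_inv: "continuous_map T T (\<lambda>x. inv x)"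
  using topological_group by (simp add: topological_group_def)

lemma openin_r_coset:
  assumes "openin T U" "g \<in> carrier G"
  shows "openin T (U #> g)"
proof -
  have U: "U \<subseteq> carrier G" using openin_subset[OF assms(1)] topspace_eq_carrier by simp
  have "U #> g = {x \<in> topspace T. x \<otimes> inv g \<in> U}"
  proof (rule subset_antisym; rule subsetI)
    fix x assume "x \<in> U #> g"
    then show "x \<in> {x \<in> topspace T. x \<otimes> inv g \<in> U}"
      using U assms(2) by (auto simp: r_coset_def topspace_eq_carrier m_assoc)
  next
    fix x assume x: "x \<in> {x \<in> topspace T. x \<otimes> inv g \<in> U}"
    then have "x = (x \<otimes> inv g) \<otimes> g" using assms(2) by (simp add: topspace_eq_carrier m_assoc)
    then show "x \<in> U #> g" using x unfolding r_coset_def by blast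
  qed
  moreover have "continuous_map T T (\<lambda>x. x \<otimes> inv g)"
    using assms(2) by (intro continuous_map_mult) (simp_all add: topspace_eq_carrier)
  then have "openin T {x \<in> topspace T. x \<otimes> inv g \<in> U}"
    using assms(1) by (rule openin_continuous_map_preimage)
  ultimately show ?thesis by simp
qed

lemma subgroup_openin_if_nbhd:
  assumes V: "subgroup V G" and W: "openin T W" "\<one> \<in> W" "W \<subseteq> V"
  shows "openin T V"
proof -
  have "V = (\<Union>x\<in>V. W #> x)"
  proof (rule subset_antisym; rule subsetI)
    fix x assume x: "x \<in> V"
    then have "\<one> \<otimes> x \<in> W #> x" unfolding r_coset_def using W(2) by blast
    then show "x \<in> (\<Union>x\<in>V. W #> x)" using x subgroup.mem_carrier[OF V] by auto
  next
    fix y assume "y \<in> (\<Union>x\<in>V. W #> x)"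
    then obtain x w where "x \<in> V" "w \<in> W" "y = w \<otimes> x" unfolding r_coset_def by blast
    then show "y \<in> V" using W(3) subgroup.m_closed[OF V] by blast
  qed
  moreover have "openin T (\<Union>x\<in>V. W #> x)"
    using openin_r_coset[OF W(1)] subgroup.mem_carrier[OF V] by (intro openin_Union) blast
  ultimately show ?thesis by simp
qed

lemma subgroup_closedin_if_openin:
  assumes V: "subgroup V G" and "openin T V"
  shows "closedin T V"
proof -
  have V_carrier: "V \<subseteq> carrier G" using subgroup.subset[OF V] .
  have outside: "y \<notin> V" if x: "x \<in> carrier G - V" and y: "y \<in> V #> x" for x y
  proof
    assume "y \<in> V"
    then have "V #> x = V"
      using repr_independence[OF y _ V] coset_join2[OF _ V] x V_carrier by auto
    then show False using coset_join1[OF _ _ V] x by blast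
  qed
  have "topspace T - V = (\<Union>x\<in>carrier G - V. V #> x)"
  proof (rule subset_antisym; rule subsetI)
    fix x assume "x \<in> topspace T - V"
    then show "x \<in> (\<Union>x\<in>carrier G - V. V #> x)"
      using rcos_self[OF _ V] by (auto simp: topspace_eq_carrier)
  next
    fix y assume "y \<in> (\<Union>x\<in>carrier G - V. V #> x)"
    then show "y \<in> topspace T - V"
      using outside r_coset_subset_G[OF V_carrier] by (auto simp: topspace_eq_carrier)
  qed
  moreover have "openin T (\<Union>x\<in>carrier G - V. V #> x)"
    using openin_r_coset[OF assms(2)] by (intro openin_Union) blast
  ultimately show ?thesis
    using V_carrier by (simp add: closedin_def topspace_eq_carrier)
qed

lemma compact_open_subgroup_subset: "V \<in> compact_open_subgroups G T \<Longrightarrow> V \<subseteq> carrier G"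
  by (auto simp: compact_open_subgroups_def dest: subgroup.subset)

lemma finite_rcosets_compact_open:
  assumes U: "U \<in> compact_open_subgroups G T" and V: "V \<in> compact_open_subgroups G T"
  shows "finite ((\<lambda>u. (U \<inter> V) #> u) ` U)"
proof -
  have sU: "subgroup U G" and cU: "compactin T U" and oU: "openin T U"
    and sV: "subgroup V G" and oV: "openin T V"
    using U V by (auto simp: compact_open_subgroups_def)
  have UV: "subgroup (U \<inter> V) G" using subgroups_Inter_pair sU sV by blast
  have Uc: "U \<subseteq> carrier G" using sU subgroup.subset by blast
  define C where "C = (\<lambda>u. (U \<inter> V) #> u) ` U"
  have "\<forall>B\<in>C. openin T B" "U \<subseteq> \<Union>C"
    unfolding C_def using openin_r_coset[OF openin_Int[OF oU oV]] rcos_self[OF _ UV] Uc by auto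
  then obtain F where F: "finite F" "F \<subseteq> C" "U \<subseteq> \<Union>F"
    using cU unfolding compactin_def by (metis (no_types, lifting))
  have "C \<subseteq> F"
  proof
    fix c assume "c \<in> C"
    then obtain u where u: "u \<in> U" "c = (U \<inter> V) #> u" unfolding C_def by auto
    then obtain f where f: "f \<in> F" "u \<in> f" using F(3) by auto
    then obtain u' where u': "u' \<in> U" "f = (U \<inter> V) #> u'" using F(2) unfolding C_def by auto
    then have "(U \<inter> V) #> u' = (U \<inter> V) #> u"
      using repr_independence[of u "U \<inter> V" u'] f UV Uc by auto
    then show "c \<in> F" using u u' f by simp
  qed
  then show ?thesis using F(1) finite_subset unfolding C_def by blast
qed

lemma rel_index_pos:
  assumes "U \<in> compact_open_subgroups G T" "V \<in> compact_open_subgroups G T"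
  shows "rel_index G U V > 0"
proof -
  have "U \<noteq> {}" using assms(1) subgroup.one_closed by (auto simp: compact_open_subgroups_def)
  then show ?thesis
    using finite_rcosets_compact_open[OF assms] unfolding rel_index_def by (simp add: card_gt_0_iff)
qed

lemma cos_dist_triangle:
  assumes U: "U \<in> compact_open_subgroups G T" and V: "V \<in> compact_open_subgroups G T"
    and W: "W \<in> compact_open_subgroups G T"
  shows "cos_dist G U W \<le> cos_dist G U V + cos_dist G V W"
proof -
  let ?p = "\<lambda>X Y. real (rel_index G X Y * rel_index G Y X)"
  have s: "subgroup U G" "subgroup V G" "subgroup W G"
    using assms by (auto simp: compact_open_subgroups_def)
  have "rel_index G U W * rel_index G W U
      \<le> (rel_index G U V * rel_index G V W) * (rel_index G W V * rel_index G V U)"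
    by (intro mult_le_mono rel_index_submult s finite_rcosets_compact_open assms)
  then have "?p U W \<le> ?p U V * ?p V W"
    by (simp only: of_nat_le_iff of_nat_mult[symmetric] ac_simps)
  moreover have pos: "?p U W > 0" "?p U V > 0" "?p V W > 0"
    using rel_index_pos assms by simp_all
  ultimately have "ln (?p U W) \<le> ln (?p U V * ?p V W)"
    by (subst ln_le_cancel_iff) simp_all
  also have "\<dots> = ln (?p U V) + ln (?p V W)"
    by (subst ln_mult) (use pos in auto)
  finally show ?thesis unfolding cos_dist_def .
qed

lemma compact_open_subgroup_image:
  assumes a: "\<alpha> \<in> top_auto G T" and V: "V \<in> compact_open_subgroups G T"
  shows "\<alpha> ` V \<in> compact_open_subgroups G T"
proof -
  have au: "\<alpha> \<in> auto G" and hm: "homeomorphic_map T T \<alpha>" using a by (auto simp: top_auto_def)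
  have "group_hom G G \<alpha>" using au is_group by (simp add: group_hom_def group_hom_axioms_def auto_def)
  then show ?thesis
    using V group_hom.subgroup_img_is_subgroup image_compactin
      homeomorphic_imp_continuous_map[OF hm] homeomorphic_imp_open_map[OF hm]
    by (auto simp: compact_open_subgroups_def open_map_def)
qed

lemma Hausdorff_space_if_totally_disconnected:
  assumes td: "totally_disconnected_space T"
  shows "Hausdorff_space T"
proof -
  have "closedin T {\<one>}"
    using closedin_connected_component_of[of T \<one>]
      connected_component_of_totally_disconnected[OF td] topspace_eq_carrier by simp
  moreover have "continuous_map (prod_topology T T) T (\<lambda>p. fst p \<otimes> inv (snd p))"
    by (intro continuous_map_mult continuous_map_fst
        continuous_map_compose[OF continuous_map_snd continuous_map_inv, unfolded o_def])
  ultimately have "closedin (prod_topology T T)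
      {p \<in> topspace (prod_topology T T). fst p \<otimes> inv (snd p) \<in> {\<one>}}"
    using closedin_continuous_map_preimage by blast
  moreover have "{p \<in> topspace (prod_topology T T). fst p \<otimes> inv (snd p) \<in> {\<one>}}
      = (\<lambda>x. (x, x)) ` topspace T"
  proof (rule subset_antisym; rule subsetI)
    fix p assume p: "p \<in> {p \<in> topspace (prod_topology T T). fst p \<otimes> inv (snd p) \<in> {\<one>}}"
    obtain x y where xy: "p = (x, y)" by (cases p)
    have xc: "x \<in> carrier G" and yc: "y \<in> carrier G" and xy1: "x \<otimes> inv y = \<one>"
      using p xy by (auto simp: topspace_eq_carrier)
    have "x = (x \<otimes> inv y) \<otimes> y" using xc yc by (simp add: m_assoc)
    then have "x = y" using yc by (simp add: xy1)
    then show "p \<in> (\<lambda>x. (x, x)) ` topspace T" using xy xc by (auto simp: topspace_eq_carrier)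
  qed (auto simp: topspace_eq_carrier)
  ultimately show ?thesis by (simp add: Hausdorff_space_closedin_diagonal)
qed

lemma right_translation_nbhd:
  assumes "compactin T K" "openin T K"
  shows "\<exists>W. openin T W \<and> \<one> \<in> W \<and> (\<forall>w\<in>W. K #> w \<subseteq> K)"
proof -
  define M where "M = {p \<in> topspace (prod_topology T T). fst p \<otimes> snd p \<in> K}"
  have M: "openin (prod_topology T T) M"
    unfolding M_def
    by (intro openin_continuous_map_preimage[OF _ assms(2)] continuous_map_mult
        continuous_map_fst continuous_map_snd)
  have one: "\<one> \<in> topspace T" by (simp add: topspace_eq_carrier)
  have "K \<times> {\<one>} \<subseteq> M"
    using openin_subset[OF assms(2)] by (auto simp: M_def topspace_eq_carrier)
  then obtain U W where UW: "openin T W" "\<one> \<in> W" "K \<subseteq> U" "U \<times> W \<subseteq> M"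
    using tube_lemma_left[OF M assms(1) one] by blast
  have "K #> w \<subseteq> K" if "w \<in> W" for w
  proof
    fix x assume "x \<in> K #> w"
    then obtain k where k: "k \<in> K" "x = k \<otimes> w" unfolding r_coset_def by blast
    then have "(k, w) \<in> M" using UW(3,4) that by blast
    then show "x \<in> K" using k(2) by (simp add: M_def)
  qed
  with UW(1,2) show ?thesis by blast
qed

theorem van_dantzig:
  assumes lc: "locally_compact_space T" and td: "totally_disconnected_space T"
  obtains V where "V \<in> compact_open_subgroups G T"
proof -
  have one: "\<one> \<in> topspace T" by (simp add: topspace_eq_carrier)
  obtain K where K: "compactin T K" "openin T K" "\<one> \<in> K"
    using compact_open_nbhd_if_totally_disconnected[OF lc
        Hausdorff_space_if_totally_disconnected[OF td] td one] .
  have K_carrier: "K \<subseteq> carrier G" using openin_subset[OF K(2)] topspace_eq_carrier by simp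
  obtain W where W: "openin T W" "\<one> \<in> W" "\<And>w. w \<in> W \<Longrightarrow> K #> w \<subseteq> K"
    using right_translation_nbhd[OF K(1,2)] by blast
  define W' where "W' = W \<inter> {x \<in> topspace T. inv x \<in> W}"
  define V where "V = {g \<in> carrier G. K #> g = K}"
  have V: "subgroup V G" unfolding V_def by (rule stabiliser_subgroup[OF K_carrier])
  have "W' \<subseteq> V"
  proof
    fix w assume w: "w \<in> W'"
    then have wc: "w \<in> carrier G" and "w \<in> W" "inv w \<in> W"
      by (simp_all add: W'_def topspace_eq_carrier)
    have "K = (K #> inv w) #> w" using K_carrier wc by (simp add: coset_mult_assoc)
    also have "\<dots> \<subseteq> K #> w" using W(3)[OF \<open>inv w \<in> W\<close>] unfolding r_coset_def by blast
    finally have "K #> w = K" using W(3)[OF \<open>w \<in> W\<close>] by (rule subset_antisym[rotated])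
    then show "w \<in> V" using wc unfolding V_def by simp
  qed
  moreover have "openin T W'"
    unfolding W'_def using W(1) by (intro openin_Int openin_continuous_map_preimage[OF continuous_map_inv])
  moreover have "\<one> \<in> W'" using W(2) by (simp add: W'_def topspace_eq_carrier)
  ultimately have open_V: "openin T V" by (intro subgroup_openin_if_nbhd[OF V])
  have "compactin T V"
  proof (rule closed_compactin[OF K(1)])
    show "V \<subseteq> K" unfolding V_def by (rule stabiliser_subset[OF K(3)])
  qed (rule subgroup_closedin_if_openin[OF V open_V])
  with V open_V show ?thesis using that unfolding compact_open_subgroups_def by blast
qed

end

definition orbit_bounded :: "('a, 'b) monoid_scheme \<Rightarrow> 'a set \<Rightarrow> ('a \<Rightarrow> 'a) set \<Rightarrow> bool" where
  "orbit_bounded G W B \<longleftrightarrow> (\<exists>M. \<forall>\<beta>\<in>B. cos_dist G (\<beta> ` W) W \<le> M)"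

lemma orbit_bounded_Un:
  assumes "orbit_bounded G W A" "orbit_bounded G W B"
  shows "orbit_bounded G W (A \<union> B)"
proof -
  obtain M N where "\<forall>\<beta>\<in>A. cos_dist G (\<beta> ` W) W \<le> M" "\<forall>\<beta>\<in>B. cos_dist G (\<beta> ` W) W \<le> N"
    using assms unfolding orbit_bounded_def by blast
  then have "\<forall>\<beta>\<in>A \<union> B. cos_dist G (\<beta> ` W) W \<le> max M N" by (auto simp: le_max_iff_disj)
  then show ?thesis unfolding orbit_bounded_def by blast
qed

lemma orbit_bounded_Union:
  assumes "finite \<A>" "\<And>A. A \<in> \<A> \<Longrightarrow> orbit_bounded G W A"
  shows "orbit_bounded G W (\<Union>\<A>)"
  using assms
proof (induction \<A> rule: finite_induct)
  case empty
  then show ?case by (simp add: orbit_bounded_def)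
next
  case (insert A \<A>)
  then show ?case by (simp add: orbit_bounded_Un)
qed

lemma (in group) orbit_bounded_set_inv:
  assumes A: "A \<subseteq> auto G" and W: "W \<subseteq> carrier G" and bounded: "orbit_bounded G W A"
  shows "orbit_bounded G W (set_inv\<^bsub>AutoGroup G\<^esub> A)"
proof -
  obtain M where M: "\<forall>\<alpha>\<in>A. cos_dist G (\<alpha> ` W) W \<le> M"
    using bounded unfolding orbit_bounded_def by blast
  have "cos_dist G ((inv\<^bsub>AutoGroup G\<^esub> \<alpha>) ` W) W \<le> M" if "\<alpha> \<in> A" for \<alpha>
  proof -
    have \<alpha>: "\<alpha> \<in> auto G" using A that by blast
    have "cos_dist G ((inv\<^bsub>AutoGroup G\<^esub> \<alpha>) ` W) W
        = cos_dist G (\<alpha> ` (inv\<^bsub>AutoGroup G\<^esub> \<alpha>) ` W) (\<alpha> ` W)"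
      using auto_image_subset[OF AutoGroup_inv_image(2)[OF \<alpha> W] W]
      by (intro cos_dist_image_auto[symmetric] \<alpha> W)
    also have "\<dots> = cos_dist G W (\<alpha> ` W)"
      by (simp only: AutoGroup_inv_image(1)[OF \<alpha> W])
    finally show ?thesis using M that by (simp add: cos_dist_commute)
  qed
  then show ?thesis unfolding orbit_bounded_def SET_INV_def by blast
qed

context top_group
begin

lemma orbit_bounded_set_mult:
  assumes A: "A \<subseteq> top_auto G T" and B: "B \<subseteq> top_auto G T"
    and W: "W \<in> compact_open_subgroups G T"
    and bounded: "orbit_bounded G W A" "orbit_bounded G W B"
  shows "orbit_bounded G W (A <#>\<^bsub>AutoGroup G\<^esub> B)"
proof -
  obtain M N where M: "\<forall>\<alpha>\<in>A. cos_dist G (\<alpha> ` W) W \<le> M"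
    and N: "\<forall>\<beta>\<in>B. cos_dist G (\<beta> ` W) W \<le> N"
    using bounded unfolding orbit_bounded_def by blast
  have "cos_dist G ((\<alpha> \<otimes>\<^bsub>AutoGroup G\<^esub> \<beta>) ` W) W \<le> N + M" if "\<alpha> \<in> A" "\<beta> \<in> B" for \<alpha> \<beta>
  proof -
    have \<alpha>: "\<alpha> \<in> top_auto G T" "\<alpha> \<in> auto G" and \<beta>: "\<beta> \<in> top_auto G T" "\<beta> \<in> auto G"
      using that A B by (auto simp: top_auto_def)
    have \<beta>W: "\<beta> ` W \<in> compact_open_subgroups G T" by (rule compact_open_subgroup_image[OF \<beta>(1) W])
    have "cos_dist G ((\<alpha> \<otimes>\<^bsub>AutoGroup G\<^esub> \<beta>) ` W) W = cos_dist G (\<alpha> ` \<beta> ` W) W"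
      by (simp add: AutoGroup_mult_image[OF \<alpha>(2) \<beta>(2) compact_open_subgroup_subset[OF W]])
    also have "\<dots> \<le> cos_dist G (\<alpha> ` \<beta> ` W) (\<alpha> ` W) + cos_dist G (\<alpha> ` W) W"
      by (intro cos_dist_triangle compact_open_subgroup_image[OF \<alpha>(1)] \<beta>W W)
    also have "cos_dist G (\<alpha> ` \<beta> ` W) (\<alpha> ` W) = cos_dist G (\<beta> ` W) W"
      by (intro cos_dist_image_auto \<alpha>(2) compact_open_subgroup_subset \<beta>W W)
    finally show ?thesis using M N that by fastforce
  qed
  then show ?thesis unfolding orbit_bounded_def set_mult_def by blast
qed

lemma bounded_auts_iff_orbit_bounded:
  assumes B: "B \<subseteq> top_auto G T" and W: "W \<in> compact_open_subgroups G T"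
  shows "bounded_auts G T B \<longleftrightarrow> orbit_bounded G W B"
proof
  assume "bounded_auts G T B"
  then obtain V M where V: "V \<in> compact_open_subgroups G T"
    and M: "\<forall>\<beta>\<in>B. \<forall>\<gamma>\<in>B. cos_dist G (\<beta> ` V) (\<gamma> ` V) \<le> M"
    unfolding bounded_auts_def by blast
  show "orbit_bounded G W B"
  proof (cases "B = {}")
    case True then show ?thesis by (simp add: orbit_bounded_def)
  next
    case False
    then obtain \<beta>\<^sub>0 where \<beta>\<^sub>0: "\<beta>\<^sub>0 \<in> B" by blast
    have "cos_dist G (\<beta> ` W) W \<le> cos_dist G W V + M + cos_dist G (\<beta>\<^sub>0 ` V) W"
      if "\<beta> \<in> B" for \<beta>
    proof -
      have cos: "\<beta> ` W \<in> compact_open_subgroups G T" "\<beta> ` V \<in> compact_open_subgroups G T"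
        "\<beta>\<^sub>0 ` V \<in> compact_open_subgroups G T"
        using compact_open_subgroup_image that \<beta>\<^sub>0 B W V by auto
      have "cos_dist G (\<beta> ` W) (\<beta> ` V) = cos_dist G W V"
        using that B by (intro cos_dist_image_auto compact_open_subgroup_subset W V)
          (auto simp: top_auto_def)
      moreover have "cos_dist G (\<beta> ` V) (\<beta>\<^sub>0 ` V) \<le> M" using M that \<beta>\<^sub>0 by blast
      ultimately show ?thesis
        using cos_dist_triangle[OF cos(1,2) W] cos_dist_triangle[OF cos(2,3) W] by linarith
    qed
    then show ?thesis unfolding orbit_bounded_def by blast
  qed
next
  assume "orbit_bounded G W B"
  then obtain M where M: "\<forall>\<beta>\<in>B. cos_dist G (\<beta> ` W) W \<le> M" unfolding orbit_bounded_def by blast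
  have "cos_dist G (\<beta> ` W) (\<gamma> ` W) \<le> M + M" if "\<beta> \<in> B" "\<gamma> \<in> B" for \<beta> \<gamma>
  proof -
    have "\<beta> ` W \<in> compact_open_subgroups G T" "\<gamma> ` W \<in> compact_open_subgroups G T"
      using compact_open_subgroup_image that B W by auto
    then have "cos_dist G (\<beta> ` W) (\<gamma> ` W) \<le> cos_dist G (\<beta> ` W) W + cos_dist G (\<gamma> ` W) W"
      using cos_dist_triangle[of "\<beta> ` W" W "\<gamma> ` W"] W cos_dist_commute[of G W "\<gamma> ` W"] by simp
    moreover have "cos_dist G (\<beta> ` W) W \<le> M" "cos_dist G (\<gamma> ` W) W \<le> M" using M that by auto
    ultimately show ?thesis by linarith
  qed
  then show "bounded_auts G T B" unfolding bounded_auts_def using W by blast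
qed

lemma bounded_auts_Union:
  assumes "finite \<A>" "\<And>A. A \<in> \<A> \<Longrightarrow> A \<subseteq> top_auto G T \<and> bounded_auts G T A"
    and W: "W \<in> compact_open_subgroups G T"
  shows "bounded_auts G T (\<Union>\<A>)"
  using assms orbit_bounded_Union[OF assms(1)] bounded_auts_iff_orbit_bounded[OF _ W]
  by (metis Union_least)

lemma bounded_auts_set_mult:
  assumes "A \<subseteq> top_auto G T" "B \<subseteq> top_auto G T" "A <#>\<^bsub>AutoGroup G\<^esub> B \<subseteq> top_auto G T"
    and "bounded_auts G T A" "bounded_auts G T B"
  shows "bounded_auts G T (A <#>\<^bsub>AutoGroup G\<^esub> B)"
proof -
  obtain W where W: "W \<in> compact_open_subgroups G T"
    using assms(4) unfolding bounded_auts_def by blast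
  show ?thesis
    using assms orbit_bounded_set_mult[OF assms(1,2) W] bounded_auts_iff_orbit_bounded[OF _ W]
    by simp
qed

lemma bounded_auts_set_inv:
  assumes "A \<subseteq> top_auto G T" "set_inv\<^bsub>AutoGroup G\<^esub> A \<subseteq> top_auto G T"
    and "bounded_auts G T A"
  shows "bounded_auts G T (set_inv\<^bsub>AutoGroup G\<^esub> A)"
proof -
  obtain W where W: "W \<in> compact_open_subgroups G T"
    using assms(3) unfolding bounded_auts_def by blast
  have "A \<subseteq> auto G" using assms(1) by (auto simp: top_auto_def)
  then show ?thesis
    using assms orbit_bounded_set_inv[OF _ compact_open_subgroup_subset[OF W]]
      bounded_auts_iff_orbit_bounded[OF _ W] by simp
qed

end

lemma bounded_auts_singleton:
  assumes "W \<in> compact_open_subgroups G T"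
  shows "bounded_auts G T {\<alpha>}"
  using assms unfolding bounded_auts_def by blast

lemma bounded_auts_subset:
  assumes "bounded_auts G T B" "A \<subseteq> B"
  shows "bounded_auts G T A"
  using assms unfolding bounded_auts_def by blast

theorem lemma2:
  fixes G :: "('a, 'b) monoid_scheme" and T :: "'a topology" and H :: "('a \<Rightarrow> 'a) set"
  assumes "tdlc_group G T"
    and "H \<subseteq> top_auto G T"
    and "subgroup H (AutoGroup G)"
  shows "(\<forall>\<alpha> \<in> H. bounded_auts G T {\<alpha>})
       \<and> (\<forall>A B. A \<subseteq> B \<and> B \<subseteq> H \<and> bounded_auts G T B \<longrightarrow> bounded_auts G T A)
       \<and> (\<forall>\<A>. finite \<A> \<and> (\<forall>A \<in> \<A>. A \<subseteq> H \<and> bounded_auts G T A)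
             \<longrightarrow> bounded_auts G T (\<Union>\<A>))
       \<and> (\<forall>A B. A \<subseteq> H \<and> B \<subseteq> H \<and> bounded_auts G T A \<and> bounded_auts G T B
             \<longrightarrow> bounded_auts G T (A <#>\<^bsub>AutoGroup G\<^esub> B))
       \<and> (\<forall>A. A \<subseteq> H \<and> bounded_auts G T A
             \<longrightarrow> bounded_auts G T (set_inv\<^bsub>AutoGroup G\<^esub> A))"
proof -
  have lc: "locally_compact_space T" and td: "totally_disconnected_space T"
    using assms(1) unfolding tdlc_group_def by auto
  interpret top_group G T
    using assms(1) by (simp add: tdlc_group_def top_group_if_topological_group)
  obtain W where W: "W \<in> compact_open_subgroups G T" using van_dantzig[OF lc td] .
  have mult_closed: "A <#>\<^bsub>AutoGroup G\<^esub> B \<subseteq> H" if "A \<subseteq> H" "B \<subseteq> H" for A B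
    using that subgroup.m_closed[OF assms(3)] unfolding set_mult_def by blast
  have inv_closed: "set_inv\<^bsub>AutoGroup G\<^esub> A \<subseteq> H" if "A \<subseteq> H" for A
    using that subgroup.m_inv_closed[OF assms(3)] unfolding SET_INV_def by blast
  show ?thesis
  proof (intro conjI allI impI ballI)
    fix \<alpha> show "bounded_auts G T {\<alpha>}" by (rule bounded_auts_singleton[OF W])
  next
    fix A B assume "A \<subseteq> B \<and> B \<subseteq> H \<and> bounded_auts G T B"
    then show "bounded_auts G T A" using bounded_auts_subset by blast
  next
    fix \<A> assume "finite \<A> \<and> (\<forall>A \<in> \<A>. A \<subseteq> H \<and> bounded_auts G T A)"
    then show "bounded_auts G T (\<Union>\<A>)"
      using bounded_auts_Union[OF _ _ W] assms(2) by blast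
  next
    fix A B assume "A \<subseteq> H \<and> B \<subseteq> H \<and> bounded_auts G T A \<and> bounded_auts G T B"
    then show "bounded_auts G T (A <#>\<^bsub>AutoGroup G\<^esub> B)"
      using bounded_auts_set_mult mult_closed assms(2) by (meson subset_trans)
  next
    fix A assume "A \<subseteq> H \<and> bounded_auts G T A"
    then show "bounded_auts G T (set_inv\<^bsub>AutoGroup G\<^esub> A)"
      using bounded_auts_set_inv inv_closed assms(2) by (meson subset_trans)
  qed
qed

end
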